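(* Let $\mathbf A\in\mathbb R^{m\times n}$ have full column rank ($\operatorname{rank}\mathbf A=n$), with smallest singular value $\sigma_n(\mathbf A)>0$, and let $\mathbf b\in\mathbb R^m$ be such that $\mathbf A\mathbf x=\mathbf b$ is consistent (so $\mathbf A^\dagger\mathbf b$ is its unique solution). Fix a row partition $\{\mathcal I_1,\dots,\mathcal I_s\}$ of $[m]$ and a column partition $\{\mathcal J_1,\dots,\mathcal J_t\}$ of $[n]$, let $\beta=\max_{(\mathcal I,\mathcal J)\in\mathcal P}\|\mathbf A_{\mathcal I,\mathcal J}\|_2^2/\|\mathbf A_{\mathcal I,\mathcal J}\|_F^2$, and assume $0<\alpha<2/(t\beta)$. Let $\mathbf x^0\in\mathbb R^n$ be arbitrary and let $\mathbf x^k$ be the $k$th iterate of the doubly stochastic block Gauss--Seidel (DSBGS) algorithm described in the context. Then for every $k\ge0$, $$\mathbb E\big[\|\mathbf x^k-\mathbf A^\dagger\mathbf b\|_2^2\big]\le\Big(1-\frac{(2\alpha-t\beta\alpha^2)\sigma_n^2(\mathbf A)}{\|\mathbf A\|_F^2}\Big)^k\|\mathbf x^0-\mathbf A^\dagger\mathbf b\|_2^2 .$$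
   Context: Notation: $\mathbf A^\dagger$ is the Moore--Penrose pseudoinverse, $\|\cdot\|_F$ the Frobenius norm, $\|\cdot\|_2$ the Euclidean norm for vectors and spectral norm (largest singular value) for matrices. For $\mathcal I\subseteq[m]=\{1,\dots,m\}$ and $\mathcal J\subseteq[n]$, $\mathbf A_{\mathcal I,\mathcal J}$ is the submatrix of $\mathbf A$ with rows indexed by $\mathcal I$ and columns indexed by $\mathcal J$; $\mathbf I_{:,\mathcal J}$ denotes the columns of the identity matrix (of the appropriate order) indexed by $\mathcal J$. DSBGS algorithm: the sets $\mathcal I_1,\dots,\mathcal I_s$ are nonempty, pairwise disjoint with union $[m]$, and $\mathcal J_1,\dots,\mathcal J_t$ are nonempty, pairwise disjoint with union $[n]$; $\mathcal P=\{\mathcal I_1,\dots,\mathcal I_s\}\times\{\mathcal J_1,\dots,\mathcal J_t\}$ (in the definition of $\beta$ the maximum is over blocks with $\mathbf A_{\mathcal I,\mathcal J}\neq 0$). Given $\alpha>0$ and $\mathbf x^0$, for $k=1,2,\dots$: pick $(\mathcal I,\mathcal J)\in\mathcal P$ (independently of previous choices) with probability $\|\mathbf A_{\mathcal I,\mathcal J}\|_F^2/\|\mathbf A\|_F^2$, and set $$\mathbf x^k=\mathbf x^{k-1}-\alpha\,\frac{\mathbf I_{:,\mathcal J}(\mathbf A_{\mathcal I,\mathcal J})^{T}(\mathbf I_{:,\mathcal I})^{T}}{\|\mathbf A_{\mathcal I,\mathcal J}\|_F^2}\,(\mathbf A\mathbf x^{k-1}-\mathbf b).$$ The expectation $\mathbb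 E$ is over the random choices of the blocks. *)

theory Defs
  imports "HOL-Analysis.Analysis" "HOL-Probability.Probability_Mass_Function"
begin

text \<open>Zero-padded block: the m x n matrix agreeing with A on I x J and zero elsewhere.
  It has the same Frobenius and spectral norms as the submatrix A_{I,J}, and its transpose
  equals I_{:,J} (A_{I,J})^T (I_{:,I})^T.\<close>
definition blockmat :: "'m set \<Rightarrow> 'n set \<Rightarrow> real^'n^'m \<Rightarrow> real^'n^'m" where
  "blockmat I J A = (\<chi> i j. if i \<in> I \<and> j \<in> J then A $ i $ j else 0)"

definition frob_norm :: "real^'n::finite^'m::finite \<Rightarrow> real" where
  "frob_norm A = sqrt (\<Sum>i\<in>UNIV. \<Sum>j\<in>UNIV. (A $ i $ j)^2)"

definition spec_norm :: "real^'n::finite^'m::finite \<Rightarrow> real" where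
  "spec_norm A = onorm (\<lambda>x. A *v x)"

definition pinv :: "real^'n::finite^'m::finite \<Rightarrow> real^'m^'n" where
  "pinv A = (THE X. A ** X ** A = A \<and> X ** A ** X = X \<and>
                    transpose (A ** X) = A ** X \<and> transpose (X ** A) = X ** A)"

definition sigma_min :: "real^'n::finite^'m::finite \<Rightarrow> real" where
  "sigma_min A = sqrt (Min {e. \<exists>v. v \<noteq> 0 \<and> (transpose A ** A) *v v = e *s v})"

definition is_partition :: "'a set set \<Rightarrow> bool" where
  "is_partition P \<longleftrightarrow> (\<forall>I\<in>P. I \<noteq> {}) \<and> (\<forall>I\<in>P. \<forall>I'\<in>P. I \<noteq> I' \<longrightarrow> I \<inter> I' = {})
                      \<and> \<Union>P = UNIV"

definition beta_const :: "real^'n::finite^'m::finite \<Rightarrow> 'm set set \<Rightarrow> 'n set set \<Rightarrow> real" where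
  "beta_const A R C = Max {(spec_norm (blockmat I J A))^2 / (frob_norm (blockmat I J A))^2
                           | I J. I \<in> R \<and> J \<in> C \<and> blockmat I J A \<noteq> 0}"

definition block_pmf :: "real^'n::finite^'m::finite \<Rightarrow> 'm set set \<Rightarrow> 'n set set \<Rightarrow> ('m set \<times> 'n set) pmf" where
  "block_pmf A R C = embed_pmf (\<lambda>(I,J). if I \<in> R \<and> J \<in> C
       then (frob_norm (blockmat I J A))^2 / (frob_norm A)^2 else 0)"

definition dsbgs_step :: "real^'n::finite^'m::finite \<Rightarrow> real^'m \<Rightarrow> real \<Rightarrow> 'm set \<Rightarrow> 'n set \<Rightarrow> real^'n \<Rightarrow> real^'n" where
  "dsbgs_step A b \<alpha> I J x = x - (\<alpha> / (frob_norm (blockmat I J A))^2) *\<^sub>R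
        (transpose (blockmat I J A) *v (A *v x - b))"

primrec dsbgs_dist :: "real^'n::finite^'m::finite \<Rightarrow> real^'m \<Rightarrow> 'm set set \<Rightarrow> 'n set set \<Rightarrow> real
     \<Rightarrow> real^'n \<Rightarrow> nat \<Rightarrow> (real^'n) pmf" where
  "dsbgs_dist A b R C \<alpha> x0 0 = return_pmf x0"
| "dsbgs_dist A b R C \<alpha> x0 (Suc k) = bind_pmf (dsbgs_dist A b R C \<alpha> x0 k)
      (\<lambda>x. map_pmf (\<lambda>(I,J). dsbgs_step A b \<alpha> I J x) (block_pmf A R C))"

end

(*
  One step contracts the squared error in expectation. Write e = x - x* and r = A e. Block (I,J)
  is drawn with probability ||A_IJ||_F^2 / ||A||_F^2, which cancels the normalisation of the
  update, so the expected value of ||x' - x*||^2 is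
    ||e||^2 - (2 alpha / ||A||_F^2) sum_IJ <r, A_IJ e>
            + (alpha^2 / ||A||_F^2) sum_IJ ||A_IJ^T r||^2 / ||A_IJ||_F^2.
  The blocks tile A, so the cross terms add up to ||r||^2. Since A_IJ^T r only involves the
  entries r_I, each quadratic term is at most beta ||r_I||^2, and summing over the t column blocks
  and then over the row blocks gives t beta ||r||^2. Finally ||A e|| >= sigma_min ||e|| because
  sigma_min^2, the least eigenvalue of A^T A, bounds its Rayleigh quotient from below, and the
  one-step bound is iterated over the independent block choices.
*)
theory Submission
  imports Defs
begin

definition is_pinv :: "real^'n::finite^'m::finite \<Rightarrow> real^'m^'n \<Rightarrow> bool" where
  "is_pinv A X \<longleftrightarrow> A ** X ** A = A \<and> X ** A ** X = X \<and>
                    transpose (A ** X) = A ** X \<and> transpose (X ** A) = X ** A"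

lemma is_pinv_unique:
  assumes X: "is_pinv A X" and Y: "is_pinv A Y"
  shows "X = Y"
proof -
  have AX: "A ** X = A ** Y"
  proof -
    have "A ** X = transpose (A ** Y) ** transpose (A ** X)"
      using X Y unfolding is_pinv_def by (metis matrix_mul_assoc)
    also have "\<dots> = transpose (A ** X ** A ** Y)"
      by (simp add: matrix_transpose_mul matrix_mul_assoc)
    also have "\<dots> = A ** Y"
      using X Y unfolding is_pinv_def by simp
    finally show ?thesis .
  qed
  have XA: "X ** A = Y ** A"
  proof -
    have "X ** A = transpose (X ** A) ** transpose (Y ** A)"
      using X Y unfolding is_pinv_def by (metis matrix_mul_assoc)
    also have "\<dots> = transpose (Y ** A ** X ** A)"
      by (simp add: matrix_transpose_mul matrix_mul_assoc)
    also have "\<dots> = Y ** A"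
      using X Y unfolding is_pinv_def by (metis matrix_mul_assoc)
    finally show ?thesis .
  qed
  have "X = X ** A ** X" using X by (simp add: is_pinv_def)
  also have "\<dots> = Y ** A ** Y" using AX XA by (metis matrix_mul_assoc)
  also have "\<dots> = Y" using Y by (simp add: is_pinv_def)
  finally show ?thesis .
qed

lemma pinv_eqI: "is_pinv A X \<Longrightarrow> pinv A = X"
  unfolding pinv_def is_pinv_def[symmetric] using is_pinv_unique by blast

lemma pinv_mult_eq_solution:
  fixes A :: "real^'n::finite^'m::finite"
  assumes inj: "inj ((*v) A)" and sol: "A *v x = b"
  shows "pinv A *v b = x"
proof -
  define M where "M = transpose A ** A"
  have "M *v v = 0 \<Longrightarrow> v = 0" for v
  proof -
    assume "M *v v = 0"
    then have "(A *v v) \<bullet> (A *v v) = 0"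
      by (metis M_def dot_lmul_matrix inner_zero_left matrix_vector_mul_assoc transpose_matrix_vector)
    then show "v = 0" using inj by (metis inner_eq_zero_iff injD matrix_vector_mult_0_right)
  qed
  then obtain K where KM: "K ** M = mat 1" using matrix_left_invertible_ker by blast
  then have MK: "M ** K = mat 1" using matrix_left_right_inverse by blast
  have "transpose K ** M = mat 1"
    by (metis MK M_def matrix_transpose_mul transpose_mat transpose_transpose)
  then have K_sym: "transpose K = K"
    by (metis MK matrix_mul_assoc matrix_mul_lid matrix_mul_rid)
  define X where "X = K ** transpose A"
  have XA: "X ** A = mat 1" using KM by (simp add: X_def M_def matrix_mul_assoc)
  have "is_pinv A X"
    unfolding is_pinv_def using XA K_sym
    by (simp add: X_def matrix_transpose_mul matrix_mul_assoc)
       (metis XA matrix_mul_assoc matrix_mul_rid)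
  then have "pinv A ** A = mat 1" using XA by (simp add: pinv_eqI)
  then show ?thesis using sol by (metis matrix_vector_mul_assoc matrix_vector_mul_lid)
qed

lemma symmetric_matrix_inner:
  fixes M :: "real^'n::finite^'n"
  assumes "transpose M = M"
  shows "(M *v x) \<bullet> y = x \<bullet> (M *v y)"
  by (metis assms dot_lmul_matrix transpose_matrix_vector)

lemma finite_eigenvalues_symmetric:
  fixes M :: "real^'n::finite^'n"
  assumes sym: "transpose M = M"
  shows "finite {e. \<exists>v. v \<noteq> 0 \<and> M *v v = e *s v}"
proof -
  define E where "E = {e. \<exists>v. v \<noteq> 0 \<and> M *v v = e *s v}"
  define f where "f e = (SOME v. v \<noteq> 0 \<and> M *v v = e *s v)" for e
  have f: "f e \<noteq> 0" "M *v f e = e *\<^sub>R f e" if "e \<in> E" for e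
    using someI_ex[of "\<lambda>v. v \<noteq> 0 \<and> M *v v = e *s v"] that
    by (auto simp: E_def f_def scalar_mult_eq_scaleR)
  have inj: "inj_on f E"
  proof (rule inj_onI)
    fix e e' assume "e \<in> E" "e' \<in> E" "f e = f e'"
    then have "e *\<^sub>R f e = e' *\<^sub>R f e" using f by metis
    then show "e = e'" using f \<open>e \<in> E\<close> by simp
  qed
  have "pairwise orthogonal (f ` E)"
  proof (clarsimp simp: pairwise_def)
    fix e e' assume ee: "e \<in> E" "e' \<in> E" "f e \<noteq> f e'"
    have "e * (f e \<bullet> f e') = e' * (f e \<bullet> f e')"
      using symmetric_matrix_inner[OF sym, of "f e" "f e'"] f[OF ee(1)] f[OF ee(2)] by simp
    with ee show "orthogonal (f e) (f e')" by (auto simp: orthogonal_def)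
  qed
  moreover have "0 \<notin> f ` E" using f(1) by auto
  ultimately have "independent (f ` E)"
    using pairwise_orthogonal_independent by blast
  then show ?thesis
    unfolding E_def[symmetric] using inj finiteI_independent finite_imageD by blast
qed

lemma linear_coeff_zero_if_nonneg:
  fixes a b :: real
  assumes "\<And>t. 0 \<le> a * t + b * t^2"
  shows "a = 0"
proof (rule ccontr)
  assume "a \<noteq> 0"
  define c where "c = \<bar>b\<bar> + 1"
  have c: "c > 0" "b \<le> c" by (auto simp: c_def)
  define t where "t = - a / (2 * c)"
  have "0 \<le> a * t + b * t^2" by (rule assms)
  also have "\<dots> \<le> a * t + c * t^2" using c by (intro add_left_mono mult_right_mono) auto
  also have "\<dots> = -(a^2) / (4 * c)" using c by (simp add: t_def power2_eq_square field_simps)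
  also have "\<dots> < 0" using c \<open>a \<noteq> 0\<close> by (simp add: divide_neg_pos)
  finally show False by simp
qed

lemma Rayleigh_minimiser_eigenvector:
  fixes M :: "real^'n::finite^'n"
  assumes sym: "transpose M = M" and u: "norm u = 1"
    and min: "\<And>x. (u \<bullet> (M *v u)) * (norm x)^2 \<le> x \<bullet> (M *v x)"
  shows "M *v u = (u \<bullet> (M *v u)) *s u"
proof -
  define \<mu> where "\<mu> = u \<bullet> (M *v u)"
  define d where "d = M *v u - \<mu> *\<^sub>R u"
  \<comment> \<open>first variation of the Rayleigh quotient at its minimiser u in the direction d\<close>
  have "0 \<le> (2 * (d \<bullet> d)) * t + (d \<bullet> (M *v d) - \<mu> * (d \<bullet> d)) * t^2" for t
  proof -
    have "(u + t *\<^sub>R d) \<bullet> (M *v (u + t *\<^sub>R d))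
            = \<mu> + 2 * t * ((M *v u) \<bullet> d) + t^2 * (d \<bullet> (M *v d))"
      using symmetric_matrix_inner[OF sym, of d u]
      by (simp add: \<mu>_def matrix_vector_right_distrib matrix_vector_mult_scaleR
          inner_add_left inner_add_right inner_commute algebra_simps power2_eq_square)
    moreover have "(M *v u) \<bullet> d = d \<bullet> d + \<mu> * (u \<bullet> d)"
      by (simp add: d_def inner_diff_left)
    moreover have "(norm (u + t *\<^sub>R d))^2 = 1 + 2 * t * (u \<bullet> d) + t^2 * (d \<bullet> d)"
      using u unfolding power2_norm_eq_inner
      by (simp add: inner_add_left inner_add_right inner_commute power2_eq_square algebra_simps
          flip: norm_eq_1)
    ultimately show ?thesis
      using min[of "u + t *\<^sub>R d"] by (simp add: \<mu>_def algebra_simps)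
  qed
  then have "d = 0" using linear_coeff_zero_if_nonneg by fastforce
  then show ?thesis by (simp add: d_def \<mu>_def scalar_mult_eq_scaleR)
qed

lemma symmetric_min_eigenvalue:
  fixes M :: "real^'n::finite^'n"
  assumes sym: "transpose M = M"
  obtains u \<mu> where "u \<noteq> 0" "M *v u = \<mu> *s u" "\<And>x. \<mu> * (norm x)^2 \<le> x \<bullet> (M *v x)"
proof -
  define Q where "Q x = x \<bullet> (M *v x)" for x
  have "\<exists>u\<in>sphere 0 1. \<forall>y\<in>sphere 0 1. Q u \<le> Q y"
  proof (rule continuous_attains_inf)
    have "axis undefined 1 \<in> sphere (0::real^'n) 1" by simp
    then show "sphere (0::real^'n) 1 \<noteq> {}" by blast
    show "continuous_on (sphere 0 1) Q" unfolding Q_def by (intro continuous_intros)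
  qed simp
  then obtain u where u: "norm u = 1" and u_min: "\<And>y. norm y = 1 \<Longrightarrow> Q u \<le> Q y" by auto
  have Q_ge: "Q u * (norm x)^2 \<le> Q x" for x
  proof (cases "x = 0")
    case False
    have "Q u \<le> Q ((1 / norm x) *\<^sub>R x)" using False u_min by simp
    also have "\<dots> = Q x / (norm x)^2"
      by (simp add: Q_def matrix_vector_mult_scaleR power2_eq_square)
    finally show ?thesis using False by (simp add: field_simps)
  qed (simp add: Q_def)
  then have "M *v u = Q u *s u"
    unfolding Q_def by (rule Rayleigh_minimiser_eigenvector[OF sym u])
  moreover have "u \<noteq> 0" using u by auto
  ultimately show ?thesis using that Q_ge unfolding Q_def by blast
qed

lemma sigma_min_le:
  fixes A :: "real^'n::finite^'m::finite"
  shows "(sigma_min A)^2 * (norm v)^2 \<le> (norm (A *v v))^2"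
proof -
  define M where "M = transpose A ** A"
  have M_inner: "x \<bullet> (M *v x) = (norm (A *v x))^2" for x
    unfolding M_def power2_norm_eq_inner
    by (metis dot_lmul_matrix inner_commute matrix_vector_mul_assoc transpose_matrix_vector)
  have "transpose M = M" by (simp add: M_def matrix_transpose_mul)
  then obtain u \<mu> where u: "u \<noteq> 0" "M *v u = \<mu> *s u"
    and \<mu>: "\<And>x. \<mu> * (norm x)^2 \<le> x \<bullet> (M *v x)"
    using symmetric_min_eigenvalue by blast
  define E where "E = {e. \<exists>v. v \<noteq> 0 \<and> M *v v = e *s v}"
  have "finite E" unfolding E_def by (rule finite_eigenvalues_symmetric) fact
  moreover have "\<mu> \<in> E" using u by (auto simp: E_def)
  ultimately have Min_le: "Min E \<le> \<mu>" and Min_in: "Min E \<in> E"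
    using Min_in by auto
  have "e \<ge> 0" if "e \<in> E" for e
  proof -
    obtain w where "w \<noteq> 0" "M *v w = e *s w" using \<open>e \<in> E\<close> by (auto simp: E_def)
    then have "e * (norm w)^2 = (norm (A *v w))^2"
      using M_inner[of w] by (simp add: scalar_mult_eq_scaleR power2_norm_eq_inner)
    then have "0 \<le> e * (norm w)^2" by simp
    then show ?thesis using \<open>w \<noteq> 0\<close> by (simp add: zero_le_mult_iff)
  qed
  then have "(sigma_min A)^2 = Min E" using Min_in by (simp add: sigma_min_def E_def M_def)
  then have "(sigma_min A)^2 * (norm v)^2 \<le> \<mu> * (norm v)^2"
    using Min_le by (simp add: mult_right_mono)
  also have "\<dots> \<le> (norm (A *v v))^2" using \<mu>[of v] by (simp only: M_inner)
  finally show ?thesis .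
qed

lemma sum_partition:
  fixes R :: "'a::finite set set"
  assumes "is_partition R"
  shows "(\<Sum>I\<in>R. sum g I) = sum g UNIV"
proof -
  have "sum g (\<Union>R) = (\<Sum>I\<in>R. sum g I)"
    using sum.Union_disjoint[of R g] assms by (simp add: is_partition_def)
  moreover have "\<Union>R = UNIV" using assms unfolding is_partition_def by blast
  ultimately show ?thesis by simp
qed

lemma sum_partition_blocks:
  fixes R :: "'m::finite set set" and C :: "'n::finite set set"
  assumes R: "is_partition R" and C: "is_partition C"
  shows "(\<Sum>I\<in>R. \<Sum>J\<in>C. \<Sum>i\<in>I. \<Sum>j\<in>J. g i j) = (\<Sum>i\<in>UNIV. \<Sum>j\<in>UNIV. g i j)"
proof -
  have "(\<Sum>I\<in>R. \<Sum>J\<in>C. \<Sum>i\<in>I. \<Sum>j\<in>J. g i j) = (\<Sum>I\<in>R. \<Sum>i\<in>I. \<Sum>J\<in>C. \<Sum>j\<in>J. g i j)"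
    by (rule sum.cong[OF refl], rule sum.swap)
  also have "\<dots> = (\<Sum>i\<in>UNIV. \<Sum>j\<in>UNIV. g i j)"
    by (simp add: sum_partition[OF C] sum_partition[OF R])
  finally show ?thesis .
qed

lemma frob_norm_sq: "(frob_norm B)^2 = (\<Sum>i\<in>UNIV. \<Sum>j\<in>UNIV. (B $ i $ j)^2)"
  unfolding frob_norm_def by (simp add: sum_nonneg)

lemma frob_norm_eq_0_iff: "frob_norm B = 0 \<longleftrightarrow> B = 0"
  unfolding frob_norm_def by (simp add: sum_nonneg sum_nonneg_eq_0_iff vec_eq_iff)

lemma sum_if_block:
  fixes g :: "'m::finite \<Rightarrow> 'n::finite \<Rightarrow> 'a::comm_monoid_add"
  shows "(\<Sum>i\<in>UNIV. \<Sum>j\<in>UNIV. if i \<in> I \<and> j \<in> J then g i j else 0) = (\<Sum>i\<in>I. \<Sum>j\<in>J. g i j)"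
proof -
  have "(\<Sum>j\<in>UNIV. if i \<in> I \<and> j \<in> J then g i j else 0) = (if i \<in> I then \<Sum>j\<in>J. g i j else 0)" for i
    by (simp add: sum.inter_restrict[symmetric])
  then show ?thesis by (simp add: sum.inter_restrict[symmetric])
qed

lemma frob_norm_blockmat_sq:
  "(frob_norm (blockmat I J A))^2 = (\<Sum>i\<in>I. \<Sum>j\<in>J. (A $ i $ j)^2)"
proof -
  have "(blockmat I J A $ i $ j)^2 = (if i \<in> I \<and> j \<in> J then (A $ i $ j)^2 else 0)" for i j
    by (simp add: blockmat_def)
  then show ?thesis by (simp add: frob_norm_sq sum_if_block)
qed

lemma inner_blockmat_mult:
  "y \<bullet> (blockmat I J A *v x) = (\<Sum>i\<in>I. \<Sum>j\<in>J. y $ i * A $ i $ j * x $ j)"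
proof -
  have "y \<bullet> (blockmat I J A *v x)
      = (\<Sum>i\<in>UNIV. \<Sum>j\<in>UNIV. if i \<in> I \<and> j \<in> J then y $ i * A $ i $ j * x $ j else 0)"
    by (auto simp: blockmat_def inner_vec_def matrix_vector_mult_def sum_distrib_left intro!: sum.cong)
  then show ?thesis by (simp add: sum_if_block)
qed

lemma sum_frob_norm_blockmat_sq:
  assumes "is_partition R" "is_partition C"
  shows "(\<Sum>I\<in>R. \<Sum>J\<in>C. (frob_norm (blockmat I J A))^2) = (frob_norm A)^2"
  unfolding frob_norm_blockmat_sq sum_partition_blocks[OF assms] by (simp only: frob_norm_sq)

lemma sum_inner_blockmat_mult:
  assumes "is_partition R" "is_partition C"
  shows "(\<Sum>I\<in>R. \<Sum>J\<in>C. y \<bullet> (blockmat I J A *v x)) = y \<bullet> (A *v x)"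
  unfolding inner_blockmat_mult sum_partition_blocks[OF assms]
  by (simp add: inner_vec_def matrix_vector_mult_def sum_distrib_left mult.assoc)

definition vec_restrict :: "'m set \<Rightarrow> real^'m \<Rightarrow> real^'m" where
  "vec_restrict I y = (\<chi> i. if i \<in> I then y $ i else 0)"

lemma sum_norm_vec_restrict_sq:
  fixes R :: "'m::finite set set"
  assumes "is_partition R"
  shows "(\<Sum>I\<in>R. (norm (vec_restrict I y))^2) = (norm y)^2"
proof -
  have "(norm (vec_restrict I y))^2 = (\<Sum>i\<in>UNIV. if i \<in> I then (y $ i)^2 else 0)" for I
    unfolding power2_norm_eq_inner
    by (auto simp: inner_vec_def vec_restrict_def power2_eq_square intro!: sum.cong)
  then have "(norm (vec_restrict I y))^2 = (\<Sum>i\<in>I. (y $ i)^2)" for I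
    by (simp add: sum.inter_restrict[symmetric])
  then have "(\<Sum>I\<in>R. (norm (vec_restrict I y))^2) = (\<Sum>i\<in>UNIV. (y $ i)^2)"
    by (simp only: sum_partition[OF assms])
  also have "\<dots> = (norm y)^2"
    unfolding power2_norm_eq_inner by (simp add: inner_vec_def power2_eq_square)
  finally show ?thesis .
qed

lemma transpose_blockmat_vec_restrict:
  "transpose (blockmat I J A) *v vec_restrict I y = transpose (blockmat I J A) *v y"
  by (auto simp: vec_eq_iff vector_matrix_mult_def blockmat_def vec_restrict_def intro!: sum.cong)

lemma norm_transpose_mult_le: "norm (transpose B *v y) \<le> spec_norm B * norm y"
proof -
  define z where "z = transpose B *v y"
  have "(norm z)^2 = y \<bullet> (B *v z)"
    by (simp add: z_def power2_norm_eq_inner dot_lmul_matrix)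
  also have "\<dots> \<le> norm y * (spec_norm B * norm z)"
    unfolding spec_norm_def
    by (meson norm_cauchy_schwarz onorm matrix_vector_mul_bounded_linear norm_ge_zero
        mult_left_mono order_trans)
  finally have "norm z * norm z \<le> norm z * (spec_norm B * norm y)"
    by (simp add: power2_eq_square algebra_simps)
  moreover have "0 \<le> spec_norm B" unfolding spec_norm_def by (simp add: onorm_pos_le)
  ultimately show ?thesis
    unfolding z_def[symmetric] by (cases "norm z = 0") (auto simp: mult_le_cancel_left_pos)
qed

lemma spec_norm_blockmat_le:
  assumes "I \<in> R" "J \<in> C" "0 \<le> beta_const A R C"
  shows "(spec_norm (blockmat I J A))^2 \<le> beta_const A R C * (frob_norm (blockmat I J A))^2"
proof (cases "blockmat I J A = 0")
  case True
  then show ?thesis using assms(3) by (simp add: spec_norm_def onorm_zero)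
next
  case False
  let ?ratio = "\<lambda>(I, J). (spec_norm (blockmat I J A))^2 / (frob_norm (blockmat I J A))^2"
  have "finite {(spec_norm (blockmat I J A))^2 / (frob_norm (blockmat I J A))^2
               | I J. I \<in> R \<and> J \<in> C \<and> blockmat I J A \<noteq> 0}"
    by (rule finite_subset[of _ "range ?ratio"]) auto
  then have "(spec_norm (blockmat I J A))^2 / (frob_norm (blockmat I J A))^2 \<le> beta_const A R C"
    unfolding beta_const_def using assms False by (intro Max_ge) blast+
  moreover have "frob_norm (blockmat I J A) \<noteq> 0" using False frob_norm_eq_0_iff by blast
  ultimately show ?thesis by (simp add: divide_le_eq)
qed

lemma pmf_block_pmf:
  assumes R: "is_partition R" and C: "is_partition C" and "A \<noteq> 0"
  shows "pmf (block_pmf A R C) (I, J)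
           = (if I \<in> R \<and> J \<in> C then (frob_norm (blockmat I J A))^2 / (frob_norm A)^2 else 0)"
proof -
  define w where "w = (\<lambda>(I, J). if I \<in> R \<and> J \<in> C
                         then (frob_norm (blockmat I J A))^2 / (frob_norm A)^2 else (0::real))"
  have nonneg: "0 \<le> w p" for p by (cases p) (simp add: w_def)
  have "(\<Sum>p\<in>UNIV. w p) = (\<Sum>p\<in>R \<times> C. w p)"
    by (rule sum.mono_neutral_right) (auto simp: w_def split: if_splits)
  also have "\<dots> = (\<Sum>I\<in>R. \<Sum>J\<in>C. (frob_norm (blockmat I J A))^2) / (frob_norm A)^2"
    by (simp add: sum.cartesian_product[symmetric] sum_divide_distrib w_def)
  also have "\<dots> = 1"
    using \<open>A \<noteq> 0\<close> by (simp add: sum_frob_norm_blockmat_sq[OF R C] frob_norm_eq_0_iff)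
  finally have "(\<integral>\<^sup>+p. ennreal (w p) \<partial>count_space UNIV) = 1"
    using nonneg by (simp add: nn_integral_count_space_finite sum_ennreal)
  then have "pmf (embed_pmf w) (I, J) = w (I, J)" using nonneg by (simp add: pmf_embed_pmf)
  then show ?thesis by (simp add: block_pmf_def w_def)
qed

lemma expectation_block_pmf:
  assumes R: "is_partition R" and C: "is_partition C" and "A \<noteq> 0"
  shows "measure_pmf.expectation (block_pmf A R C) h
           = (\<Sum>I\<in>R. \<Sum>J\<in>C. (frob_norm (blockmat I J A))^2 * h (I, J)) / (frob_norm A)^2"
proof -
  have "measure_pmf.expectation (block_pmf A R C) h = (\<Sum>p\<in>R \<times> C. h p * pmf (block_pmf A R C) p)"
    by (rule integral_measure_pmf_real)
       (auto simp: set_pmf_iff pmf_block_pmf[OF assms] split: if_splits)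
  also have "\<dots> = (\<Sum>p\<in>R \<times> C. (case p of (I, J) \<Rightarrow> (frob_norm (blockmat I J A))^2 * h (I, J))
                            / (frob_norm A)^2)"
    by (intro sum.cong) (auto simp: pmf_block_pmf[OF assms])
  finally show ?thesis
    by (simp add: sum.cartesian_product sum_divide_distrib)
qed

lemma power2_norm_diff_scaleR:
  fixes x y :: "'a::real_inner"
  shows "(norm (x - c *\<^sub>R y))^2 = (norm x)^2 - 2 * c * (x \<bullet> y) + c^2 * (norm y)^2"
  unfolding power2_norm_eq_inner
  by (simp add: inner_diff_left inner_diff_right inner_commute[of y x] power2_eq_square algebra_simps)

lemma dsbgs_step_block_le:
  fixes A :: "real^'n::finite^'m::finite" and I :: "'m set" and J :: "'n set" and x xs :: "real^'n"
  defines "B \<equiv> blockmat I J A" and "r \<equiv> A *v (x - xs)"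
  assumes sol: "A *v xs = b" and "0 \<le> \<beta>" and spec: "(spec_norm B)^2 \<le> \<beta> * (frob_norm B)^2"
  shows "(frob_norm B)^2 * (norm (dsbgs_step A b \<alpha> I J x - xs))^2
           \<le> (frob_norm B)^2 * (norm (x - xs))^2 - 2 * \<alpha> * (r \<bullet> (B *v (x - xs)))
              + \<alpha>^2 * \<beta> * (norm (vec_restrict I r))^2"
proof (cases "B = 0")
  case True
  then show ?thesis using \<open>0 \<le> \<beta>\<close> by (simp add: frob_norm_def)
next
  case False
  define f where "f = (frob_norm B)^2"
  have f: "f > 0" using False frob_norm_eq_0_iff[of B] by (simp add: f_def)
  have "A *v x - b = r" using sol by (simp add: r_def matrix_vector_mult_diff_distrib)
  then have step: "dsbgs_step A b \<alpha> I J x - xs = (x - xs) - (\<alpha> / f) *\<^sub>R (transpose B *v r)"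
    by (simp add: dsbgs_step_def B_def f_def)
  have cross: "(x - xs) \<bullet> (transpose B *v r) = r \<bullet> (B *v (x - xs))"
    by (metis dot_lmul_matrix inner_commute transpose_matrix_vector)
  have "norm (transpose B *v r) \<le> spec_norm B * norm (vec_restrict I r)"
    using norm_transpose_mult_le[of B "vec_restrict I r"]
    by (simp only: B_def transpose_blockmat_vec_restrict)
  then have "(norm (transpose B *v r))^2 \<le> (spec_norm B)^2 * (norm (vec_restrict I r))^2"
    by (metis norm_ge_zero power_mono power_mult_distrib)
  also have "\<dots> \<le> \<beta> * f * (norm (vec_restrict I r))^2"
    using spec by (simp add: f_def mult_right_mono)
  finally have "\<alpha>^2 / f * (norm (transpose B *v r))^2
                 \<le> \<alpha>^2 / f * (\<beta> * f * (norm (vec_restrict I r))^2)"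
    using f by (intro mult_left_mono) auto
  also have "\<dots> = \<alpha>^2 * \<beta> * (norm (vec_restrict I r))^2"
    using f by simp
  finally have bound: "\<alpha>^2 / f * (norm (transpose B *v r))^2 \<le> \<alpha>^2 * \<beta> * (norm (vec_restrict I r))^2" .
  have "f * (norm (dsbgs_step A b \<alpha> I J x - xs))^2
          = f * (norm (x - xs))^2 - 2 * \<alpha> * (r \<bullet> (B *v (x - xs))) + \<alpha>^2 / f * (norm (transpose B *v r))^2"
    using f unfolding step power2_norm_diff_scaleR cross by (simp add: field_simps power2_eq_square)
  then show ?thesis using bound by (simp add: f_def)
qed

definition dsbgs_kernel
  :: "real^'n::finite^'m::finite \<Rightarrow> real^'m \<Rightarrow> 'm set set \<Rightarrow> 'n set set \<Rightarrow> real \<Rightarrow> real^'n \<Rightarrow> (real^'n) pmf"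
  where "dsbgs_kernel A b R C \<alpha> x = map_pmf (\<lambda>(I, J). dsbgs_step A b \<alpha> I J x) (block_pmf A R C)"

lemma expectation_dsbgs_kernel_le:
  fixes A :: "real^'n::finite^'m::finite"
  assumes R: "is_partition R" and C: "is_partition C" and "A \<noteq> 0"
    and sol: "A *v xs = b" and \<beta>: "0 \<le> beta_const A R C"
  shows "measure_pmf.expectation (dsbgs_kernel A b R C \<alpha> x) (\<lambda>y. (norm (y - xs))^2)
         \<le> (norm (x - xs))^2 - (2 * \<alpha> - real (card C) * beta_const A R C * \<alpha>^2)
              / (frob_norm A)^2 * (norm (A *v (x - xs)))^2"
proof -
  define F where "F = (frob_norm A)^2"
  define \<beta> where "\<beta> = beta_const A R C"
  define e where "e = x - xs"
  define r where "r = A *v e"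
  define B where "B I J = blockmat I J A" for I J
  have F: "F > 0" using \<open>A \<noteq> 0\<close> by (simp add: F_def frob_norm_eq_0_iff)
  have "measure_pmf.expectation (dsbgs_kernel A b R C \<alpha> x) (\<lambda>y. (norm (y - xs))^2)
      = (\<Sum>I\<in>R. \<Sum>J\<in>C. (frob_norm (B I J))^2 * (norm (dsbgs_step A b \<alpha> I J x - xs))^2) / F"
    by (simp add: dsbgs_kernel_def expectation_block_pmf[OF R C \<open>A \<noteq> 0\<close>] case_prod_beta F_def B_def)
  also have "\<dots> \<le> (\<Sum>I\<in>R. \<Sum>J\<in>C. (frob_norm (B I J))^2 * (norm e)^2 - 2 * \<alpha> * (r \<bullet> (B I J *v e))
                     + \<alpha>^2 * \<beta> * (norm (vec_restrict I r))^2) / F"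
    using F \<beta> unfolding B_def e_def r_def \<beta>_def
    by (intro divide_right_mono sum_mono dsbgs_step_block_le sol spec_norm_blockmat_le) auto
  also have "\<dots> = (F * (norm e)^2 - 2 * \<alpha> * (norm r)^2 + real (card C) * \<alpha>^2 * \<beta> * (norm r)^2) / F"
    by (simp add: sum.distrib sum_subtractf sum_distrib_left[symmetric] sum_distrib_right[symmetric]
        B_def F_def sum_frob_norm_blockmat_sq[OF R C] sum_inner_blockmat_mult[OF R C]
        sum_norm_vec_restrict_sq[OF R] r_def[symmetric] power2_norm_eq_inner[symmetric])
  also have "\<dots> = (norm e)^2 - (2 * \<alpha> - real (card C) * \<beta> * \<alpha>^2) / F * (norm r)^2"
    using F by (simp add: field_simps)
  finally show ?thesis by (simp add: F_def \<beta>_def e_def r_def)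
qed

lemma expectation_dsbgs_kernel_contraction:
  fixes A :: "real^'n::finite^'m::finite"
  assumes R: "is_partition R" and C: "is_partition C" and "A \<noteq> 0" and sol: "A *v xs = b"
    and "0 \<le> beta_const A R C" and \<kappa>: "0 \<le> 2 * \<alpha> - real (card C) * beta_const A R C * \<alpha>^2"
  shows "measure_pmf.expectation (dsbgs_kernel A b R C \<alpha> x) (\<lambda>y. (norm (y - xs))^2)
         \<le> (1 - (2 * \<alpha> - real (card C) * beta_const A R C * \<alpha>^2) * (sigma_min A)^2 / (frob_norm A)^2)
            * (norm (x - xs))^2"
proof -
  let ?\<kappa> = "2 * \<alpha> - real (card C) * beta_const A R C * \<alpha>^2" and ?F = "(frob_norm A)^2"
  have "measure_pmf.expectation (dsbgs_kernel A b R C \<alpha> x) (\<lambda>y. (norm (y - xs))^2)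
          \<le> (norm (x - xs))^2 - ?\<kappa> / ?F * (norm (A *v (x - xs)))^2"
    using expectation_dsbgs_kernel_le[OF assms(1-5)] .
  also have "\<dots> \<le> (norm (x - xs))^2 - ?\<kappa> / ?F * ((sigma_min A)^2 * (norm (x - xs))^2)"
    using \<kappa> by (intro diff_left_mono mult_left_mono sigma_min_le) auto
  also have "\<dots> = (1 - ?\<kappa> * (sigma_min A)^2 / ?F) * (norm (x - xs))^2"
    by (simp add: algebra_simps)
  finally show ?thesis .
qed

lemma step_size_bounds:
  fixes \<alpha> \<beta> t :: real
  assumes "0 \<le> t" "0 < \<alpha>" "\<alpha> < 2 / (t * \<beta>)"
  shows "0 \<le> \<beta>" and "0 \<le> 2 * \<alpha> - t * \<beta> * \<alpha>^2"
proof -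
  have "0 < 2 / (t * \<beta>)" using assms(2,3) by linarith
  then have t\<beta>: "0 < t * \<beta>" by (simp add: zero_less_divide_iff)
  then show "0 \<le> \<beta>" using assms(1) by (simp add: zero_less_mult_iff)
  have "\<alpha> * (t * \<beta>) < 2" using assms(3) t\<beta> by (simp add: less_divide_eq)
  then show "0 \<le> 2 * \<alpha> - t * \<beta> * \<alpha>^2" using assms(2) by (simp add: power2_eq_square algebra_simps)
qed

lemma expectation_chain_le:
  fixes D :: "nat \<Rightarrow> 'a pmf" and K :: "'a \<Rightarrow> 'a pmf" and g :: "'a \<Rightarrow> real"
  assumes D0: "D 0 = return_pmf x0" and D_Suc: "\<And>n. D (Suc n) = D n \<bind> K"
    and fin: "\<And>x. finite (set_pmf (K x))" and g: "\<And>x. 0 \<le> g x"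
    and contr: "\<And>x. measure_pmf.expectation (K x) g \<le> \<rho> * g x"
  shows "measure_pmf.expectation (D n) g \<le> \<rho> ^ n * g x0"
proof (cases "\<rho> < 0")
  case True
  \<comment> \<open>a negative contraction factor forces g = 0\<close>
  have "g x = 0" for x
  proof -
    have "0 \<le> measure_pmf.expectation (K x) g" by (simp add: g)
    also have "\<dots> \<le> \<rho> * g x" by (rule contr)
    finally have "0 \<le> \<rho> * g x" .
    then show ?thesis using g[of x] True by (simp add: zero_le_mult_iff)
  qed
  then have "g = (\<lambda>_. 0)" by auto
  then show ?thesis by simp
next
  case False
  have fin_D: "finite (set_pmf (D n))" for n
    by (induction n) (simp_all add: D0 D_Suc set_bind_pmf fin)
  show ?thesis
  proof (induction n)
    case 0
    then show ?case by (simp add: D0)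
  next
    case (Suc n)
    have "measure_pmf.expectation (D (Suc n)) g
            = (\<Sum>a\<in>set_pmf (D n). pmf (D n) a * measure_pmf.expectation (K a) g)"
      unfolding D_Suc by (subst pmf_expectation_bind[OF fin_D fin]) auto
    also have "\<dots> \<le> (\<Sum>a\<in>set_pmf (D n). pmf (D n) a * (\<rho> * g a))"
      by (intro sum_mono mult_left_mono contr) simp
    also have "\<dots> = \<rho> * measure_pmf.expectation (D n) g"
      by (subst integral_measure_pmf[OF fin_D]) (auto simp: sum_distrib_left ac_simps)
    also have "\<dots> \<le> \<rho> * (\<rho> ^ n * g x0)"
      using Suc.IH False by (intro mult_left_mono) auto
    finally show ?case by simp
  qed
qed

theorem theorem3:
  fixes A :: "real^'n::finite^'m::finite" and b :: "real^'m" and x0 :: "real^'n"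
    and R :: "'m set set" and C :: "'n set set" and \<alpha> :: real and k :: nat
  assumes "rank A = CARD('n)"
    and "\<exists>x. A *v x = b"
    and "is_partition R" and "is_partition C"
    and "0 < \<alpha>" and "\<alpha> < 2 / (real (card C) * beta_const A R C)"
  shows "measure_pmf.expectation (dsbgs_dist A b R C \<alpha> x0 k) (\<lambda>x. (norm (x - pinv A *v b))^2)
     \<le> (1 - (2 * \<alpha> - real (card C) * beta_const A R C * \<alpha>^2) * (sigma_min A)^2 / (frob_norm A)^2) ^ k
        * (norm (x0 - pinv A *v b))^2"
proof -
  have inj: "inj ((*v) A)" using assms(1) full_rank_injective by blast
  have "A \<noteq> 0"
  proof
    assume "A = 0"
    then have "rank A = 0" by simp
    with assms(1) show False by simp
  qed
  have sol: "A *v (pinv A *v b) = b" using assms(2) pinv_mult_eq_solution[OF inj] by metis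
  note step_size = step_size_bounds[OF of_nat_0_le_iff assms(5,6)]
  show ?thesis
  proof (rule expectation_chain_le[where K = "dsbgs_kernel A b R C \<alpha>"])
    show "measure_pmf.expectation (dsbgs_kernel A b R C \<alpha> x) (\<lambda>y. (norm (y - pinv A *v b))^2)
          \<le> (1 - (2 * \<alpha> - real (card C) * beta_const A R C * \<alpha>^2) * (sigma_min A)^2 / (frob_norm A)^2)
             * (norm (x - pinv A *v b))^2" for x
      by (rule expectation_dsbgs_kernel_contraction[OF assms(3,4) \<open>A \<noteq> 0\<close> sol step_size])
  qed (simp_all add: dsbgs_kernel_def [abs_def])
qed

end
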